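(* Let $N=1$. For all choices of the unitaries $U_1,\dots,U_L$ and of the Hermitian unitary $\tilde O$, the following control tensors vanish identically (for all window strings $\vec n$ with $L\ge n_1\ge\cdots\ge n_k\ge1$ satisfying the indicated equalities): (i) $k=2$: $\mathbf{T}^{(2)}_{(1)}(n_1,n_2)=0$ whenever $n_1=n_2$. (ii) $k=3$: $\mathbf{T}^{(3)}_{(0,1)}(\vec n)=0$ and $\mathbf{T}^{(3)}_{(1,0)}(\vec n)=0$ whenever $n_2=n_3$; $\mathbf{T}^{(3)}_{(1,1)}(\vec n)=0$ whenever $n_1=n_2$. (iii) $k=4$: $\mathbf{T}^{(4)}_{\mu}(\vec n)=0$ in each of the cases: $\mu=(0,0,1)$ with $n_3=n_4$; $\mu=(0,1,0)$ with $n_3=n_4$; $\mu=(0,1,0)$ with $n_2=n_3$; $\mu=(0,1,1)$ with $n_2=n_3$; $\mu=(1,0,0)$ with $n_2=n_3$; $\mu=(1,0,0)$ with $n_1=n_2$; $\mu=(1,0,1)$ with $n_2=n_3$; $\mu=(1,0,1)$ with $n_1=n_2$; $\mu=(1,1,0)$ with $n_1=n_2$; $\mu=(1,1,0)$ with $n_3=n_4$; $\mu=(1,1,1)$ with $n_1=n_2$.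
   Context: Fix integers $L\ge 1$ and $N\ge 1$, and a set $Q$ of $N$ qubit labels. For $q\in Q$ let $\sigma_z^{[q]}$ denote the Pauli-$Z$ operator acting on qubit $q$ tensored with the identity on all other qubits of $(\mathbb{C}^2)^{\otimes N}$. (Digital control) Let $U_1,\dots,U_L$ be arbitrary unitaries on $(\mathbb{C}^2)^{\otimes N}$ ($U_n$ is the control propagator, constant on the $n$-th time window), and let $\tilde O$ be an arbitrary Hermitian unitary operator on $(\mathbb{C}^2)^{\otimes N}$ (the toggling-frame observable). For $q\in Q$ and $n\in\{1,\dots,L\}$ define $\tilde h_q(n)=U_n^\dagger\sigma_z^{[q]}U_n$ and $\bar h_q(n)=-\tilde O^{-1}\tilde h_q(n)\tilde O$. For $k\ge1$, a window string $\vec n=(n_1,\dots,n_k)$ with $L\ge n_1\ge\cdots\ge n_k\ge1$, a qubit string $\vec q=(q_1,\dots,q_k)\in Q^k$ and a sign string $\mu\in\{0,1\}^{k-1}$, the (window-framed) control tensor is $$\mathbf{T}^{(k)}_{\vec q;\mu}(\vec n)=\sum_{b\in\{0,1\}^k}(-1)^{\sum_{j=1}^{k-1}\mu_j b_{j+1}}\Big(\prod^{\downarrow}_{i:\,b_i=1}\bar h_{q_i}(n_i)\Big)\Big(\prod^{\uparrow}_{i:\,b_i=0}\tilde h_{q_i}(n_i)\Big),$$ where $\prod^{\downarrow}$ is the ordered product with the index $i$ decreasing from left to right, $\prod^{\uparrow}$ is the ordered product with $i$ increasing from left to right, and an empty product is the identity. When $N=1$ the qubit string is omitted and we write $\mathbf{T}^{(k)}_{\mu}(\vec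 n)$. *)

theory Defs
  imports "HOL-Analysis.Analysis"
begin

type_synonym op2 = "complex^2^2"

definition mat_adj :: "op2 \<Rightarrow> op2" where
  "mat_adj A = (\<chi> i j. cnj (A $ j $ i))"

definition is_unitary :: "op2 \<Rightarrow> bool" where
  "is_unitary U \<longleftrightarrow> mat_adj U ** U = mat 1 \<and> U ** mat_adj U = mat 1"

definition is_hermitian :: "op2 \<Rightarrow> bool" where
  "is_hermitian A \<longleftrightarrow> mat_adj A = A"

definition sigma_z :: op2 where
  "sigma_z = (\<chi> i j. if i = j then (if i = 1 then 1 else -1) else 0)"

definition h_tilde :: "(nat \<Rightarrow> op2) \<Rightarrow> nat \<Rightarrow> op2" where
  "h_tilde U n = mat_adj (U n) ** sigma_z ** U n"

definition h_bar :: "(nat \<Rightarrow> op2) \<Rightarrow> op2 \<Rightarrow> nat \<Rightarrow> op2" where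
  "h_bar U Ot n = - (matrix_inv Ot ** h_tilde U n ** Ot)"

definition mprod :: "op2 list \<Rightarrow> op2" where
  "mprod xs = foldr (**) xs (mat 1)"

text \<open>Control tensor T^{(k)}_mu(ns) for N = 1. The window string is the list ns
  (ns!0 = n_1, ..., ns!(k-1) = n_k), mu is the sign string as a boolean list
  (mu!(j-1) = True iff mu_j = 1), and a bit string b is encoded by the set S of
  0-based positions i with b_{i+1} = 1.\<close>
definition ctrl_tensor :: "(nat \<Rightarrow> op2) \<Rightarrow> op2 \<Rightarrow> bool list \<Rightarrow> nat list \<Rightarrow> op2" where
  "ctrl_tensor U Ot mu ns =
     (\<Sum>S\<in>Pow {0..<length ns}.
        (-1::real) ^ card {j. j + 1 < length ns \<and> mu ! j \<and> Suc j \<in> S} *\<^sub>R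
        (mprod (map (\<lambda>i. h_bar U Ot (ns ! i)) (rev (filter (\<lambda>i. i \<in> S) [0..<length ns]))) **
         mprod (map (\<lambda>i. h_tilde U (ns ! i)) (filter (\<lambda>i. i \<notin> S) [0..<length ns]))))"

definition window_string :: "nat \<Rightarrow> nat list \<Rightarrow> bool" where
  "window_string L ns \<longleftrightarrow> sorted (rev ns) \<and> (\<forall>n\<in>set ns. 1 \<le> n \<and> n \<le> L)"

end

theory Submission
  imports Defs
begin

(* Both h_tilde(n) and h_bar(n) square to the identity. If n_j = n_(j+1), split the sum over bit
   strings according to the bits b_j, b_(j+1): the strings with b_j = b_(j+1) = 0 and with
   b_j = b_(j+1) = 1 give the same operator (the adjacent equal factors cancel), and so do the two
   strings with b_j <> b_(j+1). The sign of b_(j+1) is (-1)^mu_j and that of b_j is (-1)^mu_(j-1)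
   (or +1 for j = 1), so when these differ both pairs carry opposite signs and the tensor vanishes.
   This happens in each of the listed cases. *)

lemma invertible_matrix_inv:
  assumes "invertible A"
  shows "A ** matrix_inv A = mat 1" and "matrix_inv A ** A = mat 1"
  using someI_ex[OF assms[unfolded invertible_def]] by (simp_all add: matrix_inv_def)

lemma unitary_invertible: "is_unitary U \<Longrightarrow> invertible U"
  unfolding is_unitary_def invertible_def by blast

lemma uminus_matrix_mul_uminus:
  fixes A B :: "'a::comm_ring_1^'n^'n"
  shows "(- A) ** (- B) = A ** B"
  by (simp add: matrix_matrix_mult_def vec_eq_iff sum_negf)

lemma conjugate_involutive:
  fixes A M M' :: "'a::comm_ring_1^'n^'n"
  assumes "A ** A = mat 1" and "M ** M' = mat 1" and "M' ** M = mat 1"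
  shows "(M' ** A ** M) ** (M' ** A ** M) = mat 1"
proof -
  have "(M' ** A ** M) ** (M' ** A ** M) = M' ** (A ** (M ** M') ** A) ** M"
    by (simp add: matrix_mul_assoc)
  also have "\<dots> = mat 1" using assms by simp
  finally show ?thesis .
qed

lemma sigma_z_involutive: "sigma_z ** sigma_z = mat 1"
  by (simp add: sigma_z_def matrix_matrix_mult_def mat_def vec_eq_iff forall_2 UNIV_2)

lemma h_tilde_involutive: "is_unitary (U n) \<Longrightarrow> h_tilde U n ** h_tilde U n = mat 1"
  unfolding h_tilde_def is_unitary_def by (rule conjugate_involutive[OF sigma_z_involutive]) auto

lemma h_bar_involutive:
  "is_unitary (U n) \<Longrightarrow> is_unitary Ot \<Longrightarrow> h_bar U Ot n ** h_bar U Ot n = mat 1"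
  unfolding h_bar_def uminus_matrix_mul_uminus
  by (intro conjugate_involutive h_tilde_involutive invertible_matrix_inv unitary_invertible)

lemma mprod_Nil [simp]: "mprod [] = mat 1"
  by (simp add: mprod_def)

lemma mprod_Cons [simp]: "mprod (x # xs) = x ** mprod xs"
  by (simp add: mprod_def)

lemma mprod_append: "mprod (xs @ ys) = mprod xs ** mprod ys"
  by (induction xs) (simp_all add: matrix_mul_assoc)

lemma upt_split_pair: "Suc p < k \<Longrightarrow> [0..<k] = [0..<p] @ p # Suc p # [Suc (Suc p)..<k]"
proof -
  assume "Suc p < k"
  then have "[0..<k] = [0..<p] @ [p..<k]"
    using upt_add_eq_append[of 0 p "k - p"] by simp
  with \<open>Suc p < k\<close> show ?thesis by (simp add: upt_conv_Cons)
qed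

lemma sum_Pow_insert:
  assumes "finite A" and "a \<notin> A"
  shows "sum f (Pow (insert a A)) = sum f (Pow A) + sum (\<lambda>S. f (insert a S)) (Pow A)"
proof -
  have "inj_on (insert a) (Pow A)"
    using assms(2) by (intro inj_onI) (metis PowD Diff_insert_absorb subsetD)
  moreover have "Pow A \<inter> insert a ` Pow A = {}" using assms(2) by auto
  ultimately show ?thesis
    by (simp add: Pow_insert sum.union_disjoint sum.reindex assms(1))
qed

lemma power_card_filter_insert:
  assumes "finite X" and "q \<notin> X"
  shows "(-1::real) ^ card {x\<in>insert q X. w x} = (if w q then -1 else 1) * (-1) ^ card {x\<in>X. w x}"
proof -
  have "{x\<in>insert q X. w x} = (if w q then insert q {x\<in>X. w x} else {x\<in>X. w x})" by auto
  then show ?thesis using assms by simp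
qed

text \<open>The control tensor with its operators indexed by position: a bit string is the set \<open>S\<close>
  of (0-based) positions carrying a bar, and \<open>w q\<close> says whether bit \<open>q\<close> enters the sign.\<close>

definition bit_product :: "(nat \<Rightarrow> op2) \<Rightarrow> (nat \<Rightarrow> op2) \<Rightarrow> nat \<Rightarrow> nat set \<Rightarrow> op2" where
  "bit_product hb ht k S =
     mprod (map hb (rev (filter (\<lambda>i. i \<in> S) [0..<k]))) ** mprod (map ht (filter (\<lambda>i. i \<notin> S) [0..<k]))"

definition signed_product_sum :: "(nat \<Rightarrow> bool) \<Rightarrow> (nat \<Rightarrow> op2) \<Rightarrow> (nat \<Rightarrow> op2) \<Rightarrow> nat \<Rightarrow> op2" where
  "signed_product_sum w hb ht k =
     (\<Sum>S\<in>Pow {0..<k}. (-1::real) ^ card {q\<in>S. w q} *\<^sub>R bit_product hb ht k S)"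

text \<open>The sign string \<open>\<mu>\<close> attaches \<open>\<mu>\<^sub>j\<close> to bit \<open>j + 1\<close>; the first bit never enters the sign.\<close>

definition sign_bit :: "bool list \<Rightarrow> nat \<Rightarrow> bool" where
  "sign_bit mu q = (case q of 0 \<Rightarrow> False | Suc j \<Rightarrow> mu ! j)"

lemma card_sign_bits:
  assumes "S \<subseteq> {0..<k}"
  shows "card {j. Suc j < k \<and> mu ! j \<and> Suc j \<in> S} = card {q\<in>S. sign_bit mu q}"
proof -
  have "{q\<in>S. sign_bit mu q} = Suc ` {j. Suc j < k \<and> mu ! j \<and> Suc j \<in> S}"
  proof (intro equalityI subsetI)
    fix q assume "q \<in> {q\<in>S. sign_bit mu q}"
    then obtain j where "q = Suc j" "Suc j \<in> S" "mu ! j"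
      by (cases q) (auto simp: sign_bit_def)
    with assms show "q \<in> Suc ` {j. Suc j < k \<and> mu ! j \<and> Suc j \<in> S}" by auto
  qed (auto simp: sign_bit_def)
  then show ?thesis by (simp add: card_image)
qed

lemma ctrl_tensor_eq_signed_product_sum:
  "ctrl_tensor U Ot mu ns =
     signed_product_sum (sign_bit mu) (\<lambda>i. h_bar U Ot (ns ! i)) (\<lambda>i. h_tilde U (ns ! i)) (length ns)"
  unfolding ctrl_tensor_def signed_product_sum_def bit_product_def
  by (intro sum.cong refl) (simp add: card_sign_bits)

lemma bit_product_Un_pair:
  assumes "Suc p < k" and "p \<notin> S" and "Suc p \<notin> S" and "T \<subseteq> {p, Suc p}"
  shows "bit_product hb ht k (S \<union> T) =
    mprod (map hb (rev (filter (\<lambda>i. i \<in> S) [Suc (Suc p)..<k]))) **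
    mprod (map hb (rev (filter (\<lambda>i. i \<in> T) [p, Suc p]))) **
    mprod (map hb (rev (filter (\<lambda>i. i \<in> S) [0..<p]))) **
    (mprod (map ht (filter (\<lambda>i. i \<notin> S) [0..<p])) **
     mprod (map ht (filter (\<lambda>i. i \<notin> T) [p, Suc p])) **
     mprod (map ht (filter (\<lambda>i. i \<notin> S) [Suc (Suc p)..<k])))"
proof -
  have "filter (\<lambda>i. i \<in> S \<union> T) xs = filter (\<lambda>i. i \<in> S) xs"
    and "filter (\<lambda>i. i \<notin> S \<union> T) xs = filter (\<lambda>i. i \<notin> S) xs"
    if "xs = [0..<p] \<or> xs = [Suc (Suc p)..<k]" for xs
    using that assms(4) by (auto intro!: filter_cong)
  then show ?thesis
    using assms(2,3) by (simp add: bit_product_def upt_split_pair[OF assms(1)] mprod_append matrix_mul_assoc)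
qed

lemma bit_product_swap_pair:
  assumes "Suc p < k" and "p \<notin> S" and "Suc p \<notin> S"
    and "hb (Suc p) = hb p" and "ht (Suc p) = ht p"
  shows "bit_product hb ht k (insert p S) = bit_product hb ht k (insert (Suc p) S)"
  using bit_product_Un_pair[OF assms(1-3), of "{p}"] bit_product_Un_pair[OF assms(1-3), of "{Suc p}"] assms(4,5)
  by simp

lemma bit_product_cancel_pair:
  assumes "Suc p < k" and "p \<notin> S" and "Suc p \<notin> S"
    and "hb (Suc p) = hb p" and "ht (Suc p) = ht p"
    and "hb p ** hb p = mat 1" and "ht p ** ht p = mat 1"
  shows "bit_product hb ht k (insert p (insert (Suc p) S)) = bit_product hb ht k S"
  using bit_product_Un_pair[OF assms(1-3), of "{p, Suc p}"] bit_product_Un_pair[OF assms(1-3), of "{}"] assms(4-7)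
  by (simp add: insert_commute)

lemma signed_product_sum_eq_0:
  assumes "Suc p < k" and "hb (Suc p) = hb p" and "ht (Suc p) = ht p"
    and "hb p ** hb p = mat 1" and "ht p ** ht p = mat 1" and "w (Suc p) \<noteq> w p"
  shows "signed_product_sum w hb ht k = 0"
proof -
  define f where "f S = (-1::real) ^ card {q\<in>S. w q} *\<^sub>R bit_product hb ht k S" for S
  define R where "R = {0..<k} - {p, Suc p}"
  have "{0..<k} = insert p (insert (Suc p) R)" using assms(1) by (auto simp: R_def)
  moreover have "finite R" and "p \<notin> insert (Suc p) R" and "Suc p \<notin> R" by (auto simp: R_def)
  ultimately have "signed_product_sum w hb ht k =
      (\<Sum>S\<in>Pow R. f S + f (insert (Suc p) S) + f (insert p S) + f (insert p (insert (Suc p) S)))"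
    by (simp add: signed_product_sum_def f_def[abs_def] sum_Pow_insert sum.distrib add.assoc)
  also have "\<dots> = 0"
  proof (rule sum.neutral, rule ballI)
    fix S assume "S \<in> Pow R"
    then have "finite S" and "p \<notin> S" and "Suc p \<notin> S"
      using \<open>finite R\<close> finite_subset by (auto simp: R_def)
    with assms show "f S + f (insert (Suc p) S) + f (insert p S) + f (insert p (insert (Suc p) S)) = 0"
      using power_card_filter_insert[of S p w] power_card_filter_insert[of S "Suc p" w]
        power_card_filter_insert[of "insert (Suc p) S" p w]
      by (cases "w p") (simp_all add: f_def bit_product_swap_pair bit_product_cancel_pair)
  qed
  finally show ?thesis .
qed

lemma ctrl_tensor_eq_0:
  assumes "Suc p < length ns" and "ns ! Suc p = ns ! p"
    and "is_unitary (U (ns ! p))" and "is_unitary Ot"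
    and "sign_bit mu (Suc p) \<noteq> sign_bit mu p"
  shows "ctrl_tensor U Ot mu ns = 0"
  unfolding ctrl_tensor_eq_signed_product_sum
  by (rule signed_product_sum_eq_0) (use assms h_tilde_involutive h_bar_involutive in auto)

theorem mainTheorem5:
  fixes L :: nat and U :: "nat \<Rightarrow> complex^2^2" and Ot :: "complex^2^2"
  assumes "L \<ge> 1"
    and "\<forall>n\<in>{1..L}. is_unitary (U n)"
    and "is_hermitian Ot" and "is_unitary Ot"
  shows
    "(\<forall>n1 n2. window_string L [n1, n2] \<and> n1 = n2 \<longrightarrow>
        ctrl_tensor U Ot [True] [n1, n2] = 0)
   \<and> (\<forall>n1 n2 n3. window_string L [n1, n2, n3] \<and> n2 = n3 \<longrightarrow>
        ctrl_tensor U Ot [False, True] [n1, n2, n3] = 0)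
   \<and> (\<forall>n1 n2 n3. window_string L [n1, n2, n3] \<and> n2 = n3 \<longrightarrow>
        ctrl_tensor U Ot [True, False] [n1, n2, n3] = 0)
   \<and> (\<forall>n1 n2 n3. window_string L [n1, n2, n3] \<and> n1 = n2 \<longrightarrow>
        ctrl_tensor U Ot [True, True] [n1, n2, n3] = 0)
   \<and> (\<forall>n1 n2 n3 n4. window_string L [n1, n2, n3, n4] \<and> n3 = n4 \<longrightarrow>
        ctrl_tensor U Ot [False, False, True] [n1, n2, n3, n4] = 0)
   \<and> (\<forall>n1 n2 n3 n4. window_string L [n1, n2, n3, n4] \<and> n3 = n4 \<longrightarrow>
        ctrl_tensor U Ot [False, True, False] [n1, n2, n3, n4] = 0)
   \<and> (\<forall>n1 n2 n3 n4. window_string L [n1, n2, n3, n4] \<and> n2 = n3 \<longrightarrow>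
        ctrl_tensor U Ot [False, True, False] [n1, n2, n3, n4] = 0)
   \<and> (\<forall>n1 n2 n3 n4. window_string L [n1, n2, n3, n4] \<and> n2 = n3 \<longrightarrow>
        ctrl_tensor U Ot [False, True, True] [n1, n2, n3, n4] = 0)
   \<and> (\<forall>n1 n2 n3 n4. window_string L [n1, n2, n3, n4] \<and> n2 = n3 \<longrightarrow>
        ctrl_tensor U Ot [True, False, False] [n1, n2, n3, n4] = 0)
   \<and> (\<forall>n1 n2 n3 n4. window_string L [n1, n2, n3, n4] \<and> n1 = n2 \<longrightarrow>
        ctrl_tensor U Ot [True, False, False] [n1, n2, n3, n4] = 0)
   \<and> (\<forall>n1 n2 n3 n4. window_string L [n1, n2, n3, n4] \<and> n2 = n3 \<longrightarrow>
        ctrl_tensor U Ot [True, False, True] [n1, n2, n3, n4] = 0)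
   \<and> (\<forall>n1 n2 n3 n4. window_string L [n1, n2, n3, n4] \<and> n1 = n2 \<longrightarrow>
        ctrl_tensor U Ot [True, False, True] [n1, n2, n3, n4] = 0)
   \<and> (\<forall>n1 n2 n3 n4. window_string L [n1, n2, n3, n4] \<and> n1 = n2 \<longrightarrow>
        ctrl_tensor U Ot [True, True, False] [n1, n2, n3, n4] = 0)
   \<and> (\<forall>n1 n2 n3 n4. window_string L [n1, n2, n3, n4] \<and> n3 = n4 \<longrightarrow>
        ctrl_tensor U Ot [True, True, False] [n1, n2, n3, n4] = 0)
   \<and> (\<forall>n1 n2 n3 n4. window_string L [n1, n2, n3, n4] \<and> n1 = n2 \<longrightarrow>
        ctrl_tensor U Ot [True, True, True] [n1, n2, n3, n4] = 0)"
proof -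
  have vanish: "ctrl_tensor U Ot mu ns = 0"
    if "window_string L ns" and "Suc p < length ns" and "ns ! Suc p = ns ! p"
      and "sign_bit mu (Suc p) \<noteq> sign_bit mu p" for mu ns p
  proof (rule ctrl_tensor_eq_0)
    show "is_unitary (U (ns ! p))"
      using that(1,2) assms(2) by (auto simp: window_string_def)
  qed (use that assms(4) in auto)
  show ?thesis
    by (auto intro: vanish[where p=0] vanish[where p=1] vanish[where p=2] simp: sign_bit_def)
qed

end
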